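(* Let $n\ge1$ be an integer and $s$ a real parameter. Let $A_n$ be the $n\times n$ matrix with $(A_n)_{i,i}=i$ for $1\le i\le n$, $(A_n)_{i,i-1}=i-1$ for $2\le i\le n$, and all other entries $0$; let $B_n$ be the $n\times n$ matrix with $(B_n)_{i,i}=2i$ for $1\le i\le n$, $(B_n)_{i,i-1}=i-1$ for $2\le i\le n$, $(B_n)_{i,i+1}=-(n-i)$ for $1\le i\le n-1$, and all other entries $0$. Then the characteristic polynomial of $C_n(s):=(n+1)A_n+sB_n$ is $$\chi(C_n(s);z)=\det(zI_n-C_n(s))=\prod_{k=1}^n\big(z-(s+k)(n+1)\big).$$ *)

theory Defs
  imports "Jordan_Normal_Form.Char_Poly"
begin

text \<open>Matrices are n x n matrices of the Jordan_Normal_Form library, indexed 0..n-1.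
  We write a = i+1, b = j+1 for the paper's 1-based row and column indices.\<close>

definition A_mat :: "nat \<Rightarrow> real mat" where
  "A_mat n = mat n n (\<lambda>(i, j). let a = i + 1; b = j + 1 in
      if b = a then real a
      else if 2 \<le> a \<and> b = a - 1 then real (a - 1)
      else 0)"

definition B_mat :: "nat \<Rightarrow> real mat" where
  "B_mat n = mat n n (\<lambda>(i, j). let a = i + 1; b = j + 1 in
      if b = a then 2 * real a
      else if 2 \<le> a \<and> b = a - 1 then real (a - 1)
      else if a \<le> n - 1 \<and> b = a + 1 then - real (n - a)
      else 0)"

definition C_mat :: "nat \<Rightarrow> real \<Rightarrow> real mat" where
  "C_mat n s = real (n + 1) \<cdot>\<^sub>m A_mat n + s \<cdot>\<^sub>m B_mat n"

end

theory Submission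
  imports Defs
begin

text \<open>Identify a polynomial p of degree < n with its coefficient vector. Since column i of
  C_mat n s is supported on rows i-1, i, i+1, the transpose of C_mat n s then acts as the
  differential operator p \<mapsto> (1+z)(s+n+1+sz) p' + (n+1+2s - s(n-1)z) p. Its eigenpolynomials
  (1+z)^a (s+n+1+sz)^(n-1-a), a < n, have the n distinct eigenvalues (n+1)(s+a+1), which are
  therefore all the roots of the monic degree-n characteristic polynomial.\<close>

lemma C_mat_index:
  assumes "i < n" "j < n"
  shows "C_mat n s $$ (j, i) =
    (if i = j then (real (n+1) + 2*s) * real (j+1)
     else if i + 1 = j then (real (n+1) + s) * real j
     else if j + 1 = i then - s * real (n - i) else 0)"
  using assms unfolding C_mat_def A_mat_def B_mat_def
  by (auto simp: Let_def algebra_simps of_nat_diff)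

lemma C_mat_carrier: "C_mat n s \<in> carrier_mat n n"
  by (simp add: C_mat_def A_mat_def B_mat_def)

definition C_op :: "nat \<Rightarrow> real \<Rightarrow> real poly \<Rightarrow> real poly" where
  "C_op n s p = [: real (n+1) + s, real (n+1) + 2*s, s :] * pderiv p
      + [: real (n+1) + 2*s, - s * real (n-1) :] * p"

lemma coeff_C_op:
  assumes "i < n"
  shows "coeff (C_op n s p) i = (real (n+1) + s) * real (i+1) * coeff p (i+1)
     + (real (n+1) + 2*s) * real (i+1) * coeff p i
     + (if i = 0 then 0 else - s * real (n - i) * coeff p (i - 1))"
  using assms
  by (cases i; cases "i - 1") (auto simp: C_op_def coeff_pderiv algebra_simps of_nat_diff)

lemma transpose_C_mat_mult_coeffs:
  assumes "degree p < n"
  shows "transpose_mat (C_mat n s) *\<^sub>v vec n (coeff p) = vec n (coeff (C_op n s p))"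
proof (rule eq_vecI)
  fix i assume "i < dim_vec (vec n (coeff (C_op n s p)))"
  then have i: "i < n" by simp
  have "(transpose_mat (C_mat n s) *\<^sub>v vec n (coeff p)) $ i = (\<Sum>j<n. C_mat n s $$ (j, i) * coeff p j)"
    using i C_mat_carrier[of n s] by (simp add: scalar_prod_def lessThan_atLeast0)
  also have "\<dots> = (\<Sum>j<n. (if j = i then (real (n+1) + 2*s) * real (i+1) * coeff p i else 0)
      + (if j = i + 1 then (real (n+1) + s) * real (i+1) * coeff p (i+1) else 0)
      + (if j = i - 1 \<and> i \<noteq> 0 then - s * real (n - i) * coeff p (i - 1) else 0))"
    by (rule sum.cong) (auto simp: C_mat_index i)
  also have "\<dots> = (real (n+1) + 2*s) * real (i+1) * coeff p i
     + (if i + 1 < n then (real (n+1) + s) * real (i+1) * coeff p (i+1) else 0)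
     + (if i \<noteq> 0 then - s * real (n - i) * coeff p (i - 1) else 0)"
    using i by (simp add: sum.distrib sum.delta')
  also have "\<dots> = coeff (C_op n s p) i"
    using i assms coeff_eq_0[of p "i+1"] by (auto simp: coeff_C_op)
  finally show "(transpose_mat (C_mat n s) *\<^sub>v vec n (coeff p)) $ i = vec n (coeff (C_op n s p)) $ i"
    using i by simp
qed (use C_mat_carrier[of n s] in simp)

lemma mult_pderiv_power: "p * pderiv (p ^ a) = Polynomial.smult (of_nat a) (p ^ a * pderiv p)"
proof (cases a)
  case (Suc m)
  have "p * pderiv (p ^ Suc m) = Polynomial.smult (of_nat (Suc m)) (p * p ^ m * pderiv p)"
    by (simp only: pderiv_power_Suc mult_smult_left mult_smult_right mult.assoc)
  then show ?thesis using Suc by simp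
qed simp

definition C_eigenpoly :: "nat \<Rightarrow> real \<Rightarrow> nat \<Rightarrow> real poly" where
  "C_eigenpoly n s a = [:1,1:] ^ a * [: s + real (n+1), s :] ^ (n - 1 - a)"

lemma C_op_C_eigenpoly:
  assumes "a < n"
  shows "C_op n s (C_eigenpoly n s a) = Polynomial.smult (real (n+1) * (s + real (a+1))) (C_eigenpoly n s a)"
proof -
  define y :: "real poly" where "y = [:1,1:]"
  define g :: "real poly" where "g = [: s + real (n+1), s :]"
  define b where "b = n - 1 - a"
  define c :: "real poly" where "c = [: real (n+1) + 2*s, - s * real (n-1) :]"
  have yg: "[: real (n+1) + s, real (n+1) + 2*s, s :] = y * g"
    by (simp add: y_def g_def algebra_simps)
  have y': "pderiv y = 1" and g': "pderiv g = [:s:]"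
    by (simp_all add: y_def g_def pderiv_pCons)
  have "C_op n s (C_eigenpoly n s a) = y * g * (y^a * pderiv (g^b) + g^b * pderiv (y^a)) + c * (y^a * g^b)"
    unfolding C_op_def C_eigenpoly_def yg pderiv_mult by (simp add: y_def g_def b_def c_def)
  also have "\<dots> = y^a * y * (g * pderiv (g^b)) + g^b * g * (y * pderiv (y^a)) + c * (y^a * g^b)"
    by (simp add: algebra_simps)
  also have "\<dots> = (y^a * g^b) * (Polynomial.smult (of_nat b) (y * [:s:]) + Polynomial.smult (of_nat a) g + c)"
    unfolding mult_pderiv_power y' g' by (simp add: algebra_simps)
  also have "Polynomial.smult (of_nat b) (y * [:s:]) + Polynomial.smult (of_nat a) g + c = [: real (n+1) * (s + real (a+1)) :]"
    using assms by (simp add: y_def g_def c_def b_def of_nat_diff algebra_simps)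
  finally show ?thesis by (simp add: C_eigenpoly_def y_def g_def b_def)
qed

lemma C_eigenpoly_nonzero: "C_eigenpoly n s a \<noteq> 0"
proof -
  have "[: s + real (n+1), s :] \<noteq> 0" by (cases "s = 0") auto
  then show ?thesis by (simp add: C_eigenpoly_def)
qed

lemma degree_C_eigenpoly:
  assumes "a < n"
  shows "degree (C_eigenpoly n s a) < n"
proof -
  have "degree (C_eigenpoly n s a)
      \<le> degree ([:1,1:] ^ a :: real poly) + degree ([: s + real (n+1), s :] ^ (n - 1 - a))"
    unfolding C_eigenpoly_def by (rule degree_mult_le)
  also have "\<dots> \<le> a + (n - 1 - a)"
    by (intro add_mono order.trans[OF degree_power_le]) auto
  finally show ?thesis using assms by linarith
qed

lemma vec_coeff_nonzero:
  assumes "p \<noteq> 0" "degree p < n"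
  shows "vec n (coeff p) \<noteq> 0\<^sub>v n"
proof
  assume "vec n (coeff p) = 0\<^sub>v n"
  then have "vec n (coeff p) $ degree p = 0" using assms(2) by simp
  then show False using assms by simp
qed

lemma eigenvalue_transpose_C_mat:
  assumes "a < n"
  shows "eigenvalue (transpose_mat (C_mat n s)) (real (n+1) * (s + real (a+1)))"
proof -
  let ?p = "C_eigenpoly n s a"
  have "transpose_mat (C_mat n s) *\<^sub>v vec n (coeff ?p) = (real (n+1) * (s + real (a+1))) \<cdot>\<^sub>v vec n (coeff ?p)"
    using assms by (auto simp: transpose_C_mat_mult_coeffs degree_C_eigenpoly C_op_C_eigenpoly)
  moreover have "vec n (coeff ?p) \<noteq> 0\<^sub>v n"
    using assms by (simp add: vec_coeff_nonzero C_eigenpoly_nonzero degree_C_eigenpoly)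
  ultimately show ?thesis
    using C_mat_carrier[of n s] unfolding eigenvalue_def eigenvector_def
    by (auto intro!: exI[of _ "vec n (coeff ?p)"])
qed

lemma poly_char_poly_C_mat:
  assumes "k \<in> {1..n}"
  shows "poly (char_poly (C_mat n s)) ((s + real k) * real (n + 1)) = 0"
proof -
  have "eigenvalue (transpose_mat (C_mat n s)) (real (n+1) * (s + real (k - 1 + 1)))"
    using assms by (intro eigenvalue_transpose_C_mat) auto
  then have "poly (char_poly (transpose_mat (C_mat n s))) ((s + real k) * real (n + 1)) = 0"
    using assms C_mat_carrier[of n s] by (simp add: eigenvalue_root_char_poly mult.commute)
  then show ?thesis by (simp add: char_poly_transpose_mat[OF C_mat_carrier])
qed

lemma char_poly_eq_prod_distinct_roots:
  fixes A :: "'a :: field mat"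
  assumes "A \<in> carrier_mat n n" "finite I" "card I = n" "inj_on r I"
    and "\<And>k. k \<in> I \<Longrightarrow> poly (char_poly A) (r k) = 0"
  shows "char_poly A = (\<Prod>k\<in>I. [: - r k, 1 :])"
proof (rule poly_eqI_degree_lead_coeff)
  show "card (r ` I) \<ge> n" using assms by (simp add: card_image)
  have "degree (\<Prod>k\<in>I. [: - r k, 1 :]) = n"
    using assms(3) by (subst degree_prod_eq_sum_degree) auto
  then show "degree (\<Prod>k\<in>I. [: - r k, 1 :]) \<le> n"
    and "degree (char_poly A) \<le> n" "coeff (char_poly A) n = coeff (\<Prod>k\<in>I. [: - r k, 1 :]) n"
    using degree_monic_char_poly[OF assms(1)] by (auto simp: lead_coeff_prod)
  show "poly (char_poly A) z = poly (\<Prod>k\<in>I. [: - r k, 1 :]) z" if "z \<in> r ` I" for z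
    using that assms(2,5) by (auto simp: poly_prod)
qed

theorem lemmaA2:
  fixes n :: nat and s :: real
  assumes "n \<ge> 1"
  shows "char_poly (C_mat n s) = (\<Prod>k = 1..n. [: - ((s + real k) * real (n + 1)), 1 :])"
  by (rule char_poly_eq_prod_distinct_roots[OF C_mat_carrier])
     (auto simp: inj_on_def intro: poly_char_poly_C_mat[simplified])

end
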